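(* Let $\rho,\sigma$ be retractable contracts with $\rho$ compliant with $\sigma$. Then one of the following holds: (1) $\rho=\mathbf 1$; (2) $\rho=\sum_{i\in I}\alpha_i.\rho_i$ and $\sigma=\sum_{j\in J}\bar\alpha_j.\sigma_j$ (retractable choices) and there exists $k\in I\cap J$ such that $\rho_k$ is compliant with $\sigma_k$; (3) $\rho=\bigoplus_{i\in I}\bar a_i.\rho_i$, $\sigma=\sum_{j\in J}a_j.\sigma_j$, $I\subseteq J$, and $\rho_k$ is compliant with $\sigma_k$ for all $k\in I$; (4) $\rho=\sum_{i\in I}a_i.\rho_i$, $\sigma=\bigoplus_{j\in J}\bar a_j.\sigma_j$, $I\supseteq J$, and $\rho_k$ is compliant with $\sigma_k$ for all $k\in J$.
   Context: Let $\mathcal N$ be a countable set of names and $\overline{\mathcal N}=\{\bar a\mid a\in\mathcal N\}$ a disjoint set of conames; $\alpha$ ranges over $\mathcal N\cup\overline{\mathcal N}$, with $\bar{\bar a}=a$. Retractable contracts are the closed expressions generated by $\sigma ::= \mathbf 1 \mid \sum_{i\in I} a_i.\sigma_i \ (\text{input}) \mid \sum_{i\in I}\bar a_i.\sigma_i\ (\text{retractable output}) \mid \bigoplus_{i\in I}\bar a_i.\sigma_i\ (\text{unretractable output}) \mid x \mid \mathsf{rec}\,x.\sigma$, where $I$ is non-empty and finite, names/conames in each choice are pairwise distinct, and $\sigma$ is not a variable in $\mathsf{rec}\,x.\sigma$. Choices are commutative; $\mathsf{rec}\,x.\sigma$ is identified with $\sigma[\mathsf{rec}\,x.\sigma/x]$.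 A unary $\bar a.\sigma$ may be read as either kind of output. Sums written $\sum$ are retractable choices (input or retractable output). Histories are stacks $\vec\gamma ::= [\,] \mid \vec\gamma:\sigma$ with $\sigma$ a retractable contract or the special symbol $\circ$. A contract with history is a pair $\langle\vec\gamma,\sigma\rangle$ with $\sigma$ a contract or $\circ$. Transitions: $\langle\vec\gamma,\alpha.\sigma+\sigma'\rangle\xrightarrow{\alpha}\langle\vec\gamma:\sigma',\sigma\rangle$ (for retractable choices); $\langle\vec\gamma,\bar a.\sigma\oplus\sigma'\rangle\xrightarrow{\tau}\langle\vec\gamma,\bar a.\sigma\rangle$; $\langle\vec\gamma,\alpha.\sigma\rangle\xrightarrow{\alpha}\langle\vec\gamma:\circ,\sigma\rangle$; $\langle\vec\gamma:\sigma',\sigma\rangle\xrightarrow{\mathsf{rb}}\langle\vec\gamma,\sigma'\rangle$. Client/server pairs $\langle\vec\delta,\rho\rangle\parallel\langle\vec\gamma,\sigma\rangle$ reduce by: (comm) if $\langle\vec\delta,\rho\rangle\xrightarrow{\alpha}\langle\vec\delta',\rho'\rangle$ and $\langle\vec\gamma,\sigma\rangle\xrightarrow{\bar\alpha}\langle\vec\gamma',\sigma'\rangle$ then the pair reduces to $\langle\vec\delta',\rho'\rangle\parallel\langle\vec\gamma',\sigma'\rangle$; ($\tau$) a $\tau$-transition of either component alone; (rbk) if both components do an $\mathsf{rb}$ transition and $\rho\neq\mathbf 1$, both roll back simultaneously; rule (rbk) applies only if neither (comm) nor ($\tau$) applies. Then $\langle\vec\delta,\rho\rangle$ is compliant with $\langle\vec\gamma,\sigma\rangle$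 if whenever $\langle\vec\delta,\rho\rangle\parallel\langle\vec\gamma,\sigma\rangle$ reduces in finitely many steps to a pair $\langle\vec\delta',\rho'\rangle\parallel\langle\vec\gamma',\sigma'\rangle$ with no further reduction, we have $\rho'=\mathbf 1$. A contract $\rho$ is compliant with $\sigma$ if $\langle[\,],\rho\rangle$ is compliant with $\langle[\,],\sigma\rangle$. *)

theory Defs
  imports "HOL-Library.Finite_Map"
begin

text \<open>A contract is represented coinductively: recursion  rec x.sigma  is identified with its
unfolding, so closed contractive terms correspond exactly to regular trees (see rcontract).
Choices are finite maps from names to continuations (names pairwise distinct, commutativity
for free).  Inp = input sum, ROut = retractable output sum, UOut = unretractable output.\<close>

codatatype 'n contract =
    One
  | Inp "('n, 'n contract) fmap"
  | ROut "('n, 'n contract) fmap"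
  | UOut "('n, 'n contract) fmap"

datatype 'n act = In 'n | Out 'n

fun dual :: "'n act \<Rightarrow> 'n act" where
  "dual (In a) = Out a"
| "dual (Out a) = In a"

fun children :: "'n contract \<Rightarrow> 'n contract set" where
  "children One = {}"
| "children (Inp f) = fmran' f"
| "children (ROut f) = fmran' f"
| "children (UOut f) = fmran' f"

fun nonempty_top :: "'n contract \<Rightarrow> bool" where
  "nonempty_top One = True"
| "nonempty_top (Inp f) = (fmdom f \<noteq> {||})"
| "nonempty_top (ROut f) = (fmdom f \<noteq> {||})"
| "nonempty_top (UOut f) = (fmdom f \<noteq> {||})"

inductive reach :: "'n contract \<Rightarrow> 'n contract \<Rightarrow> bool" where
  refl: "reach r r"
| step: "reach r s \<Longrightarrow> t \<in> children s \<Longrightarrow> reach r t"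

text \<open>Retractable contracts: regular trees (finitely many subtrees) all of whose choices
are non-empty.\<close>
definition rcontract :: "'n contract \<Rightarrow> bool" where
  "rcontract r \<longleftrightarrow> finite {s. reach r s} \<and> (\<forall>s. reach r s \<longrightarrow> nonempty_top s)"

text \<open>A unary output may be read as either kind of output.\<close>
definition is_uout :: "'n contract \<Rightarrow> ('n, 'n contract) fmap \<Rightarrow> bool" where
  "is_uout r f \<longleftrightarrow> r = UOut f \<or> (r = ROut f \<and> fcard (fmdom f) = 1)"

fun is_rsum :: "'n contract \<Rightarrow> bool" where
  "is_rsum One = False"
| "is_rsum (Inp f) = True"
| "is_rsum (ROut f) = True"
| "is_rsum (UOut f) = (fcard (fmdom f) = 1)"

fun rbr :: "'n contract \<Rightarrow> 'n act \<Rightarrow> 'n contract option" where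
  "rbr (Inp f) (In a) = fmlookup f a"
| "rbr (ROut f) (Out a) = fmlookup f a"
| "rbr (UOut f) (Out a) = (if fcard (fmdom f) = 1 then fmlookup f a else None)"
| "rbr _ _ = None"

text \<open>Stack elements and current component: Some sigma or None (the symbol circ).
The top of the stack is the head of the list.\<close>
type_synonym 'n hist = "'n contract option list"
type_synonym 'n hc = "'n hist \<times> 'n contract option"

datatype 'n lbl = Act "'n act" | Tau | Rb

definition resid :: "(('n, 'n contract) fmap \<Rightarrow> 'n contract) \<Rightarrow> ('n, 'n contract) fmap
    \<Rightarrow> 'n \<Rightarrow> 'n contract option" where
  "resid C f a = (if fmdom' f = {a} then None else Some (C (fmdrop a f)))"

inductive trans :: "'n hc \<Rightarrow> 'n lbl \<Rightarrow> 'n hc \<Rightarrow> bool" where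
  inp: "fmlookup f a = Some s \<Longrightarrow>
     trans (h, Some (Inp f)) (Act (In a)) (resid Inp f a # h, Some s)"
| rout: "fmlookup f a = Some s \<Longrightarrow>
     trans (h, Some (ROut f)) (Act (Out a)) (resid ROut f a # h, Some s)"
| uout_unary: "fmlookup f a = Some s \<Longrightarrow> fmdom' f = {a} \<Longrightarrow>
     trans (h, Some (UOut f)) (Act (Out a)) (None # h, Some s)"
| uout_tau: "fmlookup f a = Some s \<Longrightarrow> fmdom' f \<noteq> {a} \<Longrightarrow>
     trans (h, Some (UOut f)) Tau (h, Some (UOut (fmupd a s fmempty)))"
| rb: "trans (Some s' # h, c) Rb (h, Some s')"
| rb_circ: "trans (None # h, c) Rb (h, None)"

inductive red0 :: "'n hc \<times> 'n hc \<Rightarrow> 'n hc \<times> 'n hc \<Rightarrow> bool" where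
  comm: "trans c (Act al) c' \<Longrightarrow> trans s (Act (dual al)) s' \<Longrightarrow> red0 (c, s) (c', s')"
| tauL: "trans c Tau c' \<Longrightarrow> red0 (c, s) (c', s)"
| tauR: "trans s Tau s' \<Longrightarrow> red0 (c, s) (c, s')"

inductive red :: "'n hc \<times> 'n hc \<Rightarrow> 'n hc \<times> 'n hc \<Rightarrow> bool" where
  base: "red0 p q \<Longrightarrow> red p q"
| rbk: "trans c Rb c' \<Longrightarrow> trans s Rb s' \<Longrightarrow> snd c \<noteq> Some One \<Longrightarrow>
        (\<nexists>q. red0 (c, s) q) \<Longrightarrow> red (c, s) (c', s')"

definition compliant_h :: "'n hc \<Rightarrow> 'n hc \<Rightarrow> bool" where
  "compliant_h c s \<longleftrightarrow>
     (\<forall>c' s'. red\<^sup>*\<^sup>* (c, s) (c', s') \<longrightarrow> (\<nexists>q. red (c', s') q) \<longrightarrow> snd c' = Some One)"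

definition compliant :: "'n contract \<Rightarrow> 'n contract \<Rightarrow> bool" where
  "compliant r s \<longleftrightarrow> compliant_h ([], Some r) ([], Some s)"

end

theory Submission
  imports Defs
begin

text \<open>Non-compliance is witnessed by a run that gets stuck with the client different from 1.
  For two retractable sums none of whose matching continuations are compliant, such a run is
  built by synchronising on a matching pair, failing inside it and rolling both parties back
  to the residual sums; the client's residual has fewer branches, so iterating ends in a
  stuck state. An unretractable output with several branches can commit by an internal step
  to any single branch, which is a unary, hence retractable, output; since compliance is
  preserved by reduction, all remaining cases reduce to the case of two retractable sums.\<close>

definition may_fail :: "'n hc \<times> 'n hc \<Rightarrow> bool" where
  "may_fail p \<longleftrightarrow> (\<exists>q. red\<^sup>*\<^sup>* p q \<and> (\<nexists>r. red q r) \<and> snd (fst q) \<noteq> Some One)"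

lemma compliant_iff_not_may_fail: "compliant r s \<longleftrightarrow> \<not> may_fail (([], Some r), ([], Some s))"
  unfolding compliant_def compliant_h_def may_fail_def by (metis prod.collapse fst_conv)

lemma may_fail_reds: "red\<^sup>*\<^sup>* p q \<Longrightarrow> may_fail q \<Longrightarrow> may_fail p"
  unfolding may_fail_def by (meson rtranclp_trans)

lemma may_fail_red: "red p q \<Longrightarrow> may_fail q \<Longrightarrow> may_fail p"
  by (rule may_fail_reds) auto

lemma may_fail_stuck: "(\<nexists>r. red q r) \<Longrightarrow> snd (fst q) \<noteq> Some One \<Longrightarrow> may_fail q"
  unfolding may_fail_def by blast

lemma trans_Rb_nonempty_hist: "trans (h, c) Rb q \<Longrightarrow> h \<noteq> []"
  by (auto elim: trans.cases)

lemma may_fail_stuck_empty_hist: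
  assumes "\<nexists>r. red0 (([], c), ([], s)) r" and "c \<noteq> Some One"
  shows "may_fail (([], c), ([], s))"
  using assms by (intro may_fail_stuck) (auto elim!: red.cases dest: trans_Rb_nonempty_hist)

lemma trans_pop: "trans (x # h, c) Rb (h, x)"
  by (cases x) (auto intro: trans.intros)

fun extend_hist :: "'n hist \<Rightarrow> 'n hc \<Rightarrow> 'n hc" where
  "extend_hist e (h, c) = (h @ e, c)"

abbreviation extend_hists :: "'n hist \<Rightarrow> 'n hist \<Rightarrow> 'n hc \<times> 'n hc \<Rightarrow> 'n hc \<times> 'n hc" where
  "extend_hists e1 e2 \<equiv> map_prod (extend_hist e1) (extend_hist e2)"

lemma trans_extend_hist: "trans p l q \<Longrightarrow> trans (extend_hist e p) l (extend_hist e q)"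
  by (induction rule: trans.induct) (auto intro: trans.intros)

lemma trans_extend_hist_inv: "trans (extend_hist e p) l q \<Longrightarrow> l \<noteq> Rb \<Longrightarrow> \<exists>q0. trans p l q0"
  by (cases p) (auto elim!: trans.cases intro: trans.intros)

lemma red0_extend_hists_inv:
  assumes "red0 (extend_hists e1 e2 (c, s)) r"
  shows "\<exists>r0. red0 (c, s) r0"
  using assms
proof cases
  case (comm c0 al c' s0 s')
  then have "\<exists>c1. trans c (Act al) c1" "\<exists>s1. trans s (Act (dual al)) s1"
    using trans_extend_hist_inv by (simp; blast)+
  then show ?thesis by (blast intro: red0.comm)
next
  case (tauL c0 c' s0)
  then have "\<exists>c1. trans c Tau c1" using trans_extend_hist_inv by (simp; blast)+
  then show ?thesis by (blast intro: red0.tauL)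
next
  case (tauR s0 s' c0)
  then have "\<exists>s1. trans s Tau s1" using trans_extend_hist_inv by (simp; blast)+
  then show ?thesis by (blast intro: red0.tauR)
qed

lemma red0_extend_hists: "red0 p q \<Longrightarrow> red0 (extend_hists e1 e2 p) (extend_hists e1 e2 q)"
  by (induction rule: red0.induct) (auto intro: red0.intros trans_extend_hist)

lemma red_extend_hists: "red p q \<Longrightarrow> red (extend_hists e1 e2 p) (extend_hists e1 e2 q)"
proof (induction rule: red.induct)
  case (base p q)
  then show ?case by (intro red.base red0_extend_hists)
next
  case (rbk c c' s s')
  have "\<nexists>r. red0 (extend_hists e1 e2 (c, s)) r"
    using rbk.hyps(4) by (blast dest: red0_extend_hists_inv)
  moreover have "snd (extend_hist e1 c) \<noteq> Some One"
    using rbk.hyps(3) by (cases c) simp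
  ultimately show ?case
    using rbk.hyps(1,2) by (auto intro!: red.rbk trans_extend_hist)
qed

lemma reds_extend_hists: "red\<^sup>*\<^sup>* p q \<Longrightarrow> red\<^sup>*\<^sup>* (extend_hists e1 e2 p) (extend_hists e1 e2 q)"
  by (induction rule: rtranclp_induct) (auto intro: rtranclp.rtrancl_into_rtrancl red_extend_hists)

lemma trans_hist_length:
  "trans p l q \<Longrightarrow> length (fst q) =
     (case l of Act _ \<Rightarrow> Suc (length (fst p)) | Tau \<Rightarrow> length (fst p) | Rb \<Rightarrow> length (fst p) - 1)"
  by (induction rule: trans.induct) auto

lemma red_hist_lengths_eq:
  "red p q \<Longrightarrow> length (fst (fst p)) = length (fst (snd p)) \<Longrightarrow>
   length (fst (fst q)) = length (fst (snd q))"
  by (induction rule: red.induct) (auto elim!: red0.cases dest!: trans_hist_length)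

lemma reds_hist_lengths_eq:
  "red\<^sup>*\<^sup>* p q \<Longrightarrow> length (fst (fst p)) = length (fst (snd p)) \<Longrightarrow>
   length (fst (fst q)) = length (fst (snd q))"
  by (induction rule: rtranclp_induct) (auto dest: red_hist_lengths_eq)

text \<open>A failing run from empty histories ends with empty histories, since otherwise both
  parties could still roll back. Replayed on top of one history entry each, the stuck
  end state therefore rolls back to exactly these entries.\<close>

lemma may_fail_rollback:
  assumes "may_fail (([], c), ([], s))"
  shows "red\<^sup>*\<^sup>* (([x], c), ([y], s)) (([], x), ([], y))"
proof -
  obtain h1 c1 h2 s1 where run: "red\<^sup>*\<^sup>* (([], c), ([], s)) ((h1, c1), (h2, s1))"
    and stuck: "\<nexists>r. red ((h1, c1), (h2, s1)) r" and c1: "c1 \<noteq> Some One"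
    using assms unfolding may_fail_def by force
  have no_red0: "\<nexists>r. red0 ((h1, c1), (h2, s1)) r"
    using stuck red.base by blast
  have len: "length h1 = length h2"
    using reds_hist_lengths_eq[OF run] by simp
  have "h1 = []"
  proof (rule ccontr)
    assume "h1 \<noteq> []"
    then obtain x1 t1 x2 t2 where "h1 = x1 # t1" "h2 = x2 # t2"
      using len by (cases h1; cases h2) auto
    then have "red ((h1, c1), (h2, s1)) ((t1, x1), (t2, x2))"
      using c1 no_red0 by (auto intro!: red.rbk trans_pop)
    with stuck show False by blast
  qed
  moreover from this have "h2 = []" using len by simp
  ultimately have "red\<^sup>*\<^sup>* (([x], c), ([y], s)) (([x], c1), ([y], s1))"
    using reds_extend_hists[OF run, of "[x]" "[y]"] by simp
  moreover have "red (([x], c1), ([y], s1)) (([], x), ([], y))"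
  proof (rule red.rbk)
    show "\<nexists>q. red0 (([x], c1), ([y], s1)) q"
      using no_red0 red0_extend_hists_inv[of "[x]" "[y]" "([], c1)" "([], s1)"]
        \<open>h1 = []\<close> \<open>h2 = []\<close> by auto
  qed (use c1 trans_pop in auto)
  ultimately show ?thesis by simp
qed

lemma trans_None: "\<not> trans (h, None) (Act al) q" "\<not> trans (h, None) Tau q"
  by (auto elim: trans.cases)

lemma trans_One: "\<not> trans (h, Some One) (Act al) q" "\<not> trans (h, Some One) Tau q"
  by (auto elim: trans.cases)

lemma trans_Inp:
  "trans (h, Some (Inp f)) (Act al) q \<longleftrightarrow>
     (\<exists>a s. al = In a \<and> fmlookup f a = Some s \<and> q = (resid Inp f a # h, Some s))"
  "\<not> trans (h, Some (Inp f)) Tau q"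
  by (auto elim: trans.cases intro: trans.intros)

lemma trans_ROut:
  "trans (h, Some (ROut f)) (Act al) q \<longleftrightarrow>
     (\<exists>a s. al = Out a \<and> fmlookup f a = Some s \<and> q = (resid ROut f a # h, Some s))"
  "\<not> trans (h, Some (ROut f)) Tau q"
  by (auto elim: trans.cases intro: trans.intros)

lemma trans_UOut:
  "trans (h, Some (UOut f)) (Act al) q \<longleftrightarrow>
     (\<exists>a s. al = Out a \<and> fmlookup f a = Some s \<and> fmdom' f = {a} \<and> q = (None # h, Some s))"
  "trans (h, Some (UOut f)) Tau q \<longleftrightarrow>
     (\<exists>a s. fmlookup f a = Some s \<and> fmdom' f \<noteq> {a} \<and> q = (h, Some (UOut (fmupd a s fmempty))))"
  by (auto elim!: trans.cases intro: trans.intros)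

lemmas trans_simps = trans_None trans_One trans_Inp trans_ROut trans_UOut

lemma fcard_fmdom_eq_1_iff: "fcard (fmdom f) = 1 \<longleftrightarrow> (\<exists>a. fmdom' f = {a})"
  by (simp add: fcard.rep_eq fmdom'_alt_def card_1_singleton_iff)

lemma card_fmdom'_fmdrop_less: "fmlookup f a = Some s \<Longrightarrow> card (fmdom' (fmdrop a f)) < card (fmdom' f)"
  by (metis card_Diff1_less finite_fmdom' fmdom'I fmdom'_drop)

fun rresid :: "'n contract \<Rightarrow> 'n act \<Rightarrow> 'n contract option" where
  "rresid (Inp f) (In a) = resid Inp f a"
| "rresid (ROut f) (Out a) = resid ROut f a"
| "rresid _ _ = None"

fun choice_size :: "'n contract \<Rightarrow> nat" where
  "choice_size One = 0"
| "choice_size (Inp f) = card (fmdom' f)"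
| "choice_size (ROut f) = card (fmdom' f)"
| "choice_size (UOut f) = card (fmdom' f)"

lemma rsum_trans_Act:
  "is_rsum \<rho> \<Longrightarrow> trans (h, Some \<rho>) (Act al) q \<longleftrightarrow>
     (\<exists>\<rho>k. rbr \<rho> al = Some \<rho>k \<and> q = (rresid \<rho> al # h, Some \<rho>k))"
  apply (cases \<rho>; cases al)
   apply (auto simp del: One_nat_def simp: fcard_fmdom_eq_1_iff trans_simps dest: fmdom'I)
  apply (metis fmdom'I singletonD)
  done

lemma rsum_no_trans_Tau: "is_rsum \<rho> \<Longrightarrow> \<not> trans (h, Some \<rho>) Tau q"
  by (cases \<rho>) (auto simp del: One_nat_def simp: fcard_fmdom_eq_1_iff trans_simps dest: fmdom'I)

lemma rresid_is_rsum: "rresid \<rho> al = Some \<rho>' \<Longrightarrow> is_rsum \<rho>'"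
  by (cases \<rho>; cases al) (auto simp: resid_def split: if_splits)

lemma choice_size_rresid:
  "rbr \<rho> al = Some \<rho>k \<Longrightarrow> rresid \<rho> al = Some \<rho>' \<Longrightarrow> choice_size \<rho>' < choice_size \<rho>"
  apply (cases \<rho>; cases al)
   apply (simp_all add: resid_def split: if_splits)
  apply (metis card_fmdom'_fmdrop_less choice_size.simps(2,3))+
  done

lemma rbr_rresid: "rresid \<rho> al = Some \<rho>' \<Longrightarrow> rbr \<rho>' al' = Some x \<Longrightarrow> rbr \<rho> al' = Some x"
  by (cases \<rho>; cases al; cases al') (auto simp: resid_def split: if_splits)

lemma no_red0_rsum_opts:
  assumes "\<forall>\<rho>. c = Some \<rho> \<longrightarrow> is_rsum \<rho>" and "\<forall>\<sigma>. s = Some \<sigma> \<longrightarrow> is_rsum \<sigma>"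
    and "\<nexists>\<rho> \<sigma> al \<rho>k \<sigma>k. c = Some \<rho> \<and> s = Some \<sigma> \<and> rbr \<rho> al = Some \<rho>k \<and> rbr \<sigma> (dual al) = Some \<sigma>k"
  shows "\<nexists>r. red0 ((h1, c), (h2, s)) r"
  using assms by (cases c; cases s) (fastforce elim!: red0.cases simp: trans_None rsum_trans_Act rsum_no_trans_Tau)+

text \<open>Each round the client and the server agree on a pair of branches, the failure of that
  pair rolls both back to the residual sums, and the client's residual has fewer branches.\<close>

lemma may_fail_rsum:
  assumes "is_rsum \<rho>" and "is_rsum \<sigma>"
    and "\<forall>al \<rho>k \<sigma>k. rbr \<rho> al = Some \<rho>k \<longrightarrow> rbr \<sigma> (dual al) = Some \<sigma>k \<longrightarrow> \<not> compliant \<rho>k \<sigma>k"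
  shows "may_fail (([], Some \<rho>), ([], Some \<sigma>))"
  using assms
proof (induction "choice_size \<rho>" arbitrary: \<rho> \<sigma> rule: less_induct)
  case less
  show ?case
  proof (cases "\<exists>al \<rho>k \<sigma>k. rbr \<rho> al = Some \<rho>k \<and> rbr \<sigma> (dual al) = Some \<sigma>k")
    case True
    then obtain al \<rho>k \<sigma>k where \<rho>k: "rbr \<rho> al = Some \<rho>k" and \<sigma>k: "rbr \<sigma> (dual al) = Some \<sigma>k"
      by blast
    define x where "x = rresid \<rho> al"
    define y where "y = rresid \<sigma> (dual al)"
    have "red (([], Some \<rho>), ([], Some \<sigma>)) (([x], Some \<rho>k), ([y], Some \<sigma>k))"
      using \<rho>k \<sigma>k less.prems(1,2)
      by (auto intro!: red.base red0.comm simp: rsum_trans_Act x_def y_def)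
    moreover have "red\<^sup>*\<^sup>* (([x], Some \<rho>k), ([y], Some \<sigma>k)) (([], x), ([], y))"
      using less.prems(3) \<rho>k \<sigma>k by (intro may_fail_rollback) (simp add: compliant_iff_not_may_fail)
    moreover have "may_fail (([], x), ([], y))"
    proof (cases "\<exists>\<rho>' \<sigma>'. x = Some \<rho>' \<and> y = Some \<sigma>'")
      case True
      then obtain \<rho>' \<sigma>' where x: "x = Some \<rho>'" and y: "y = Some \<sigma>'" by blast
      have "choice_size \<rho>' < choice_size \<rho>"
        using choice_size_rresid \<rho>k x unfolding x_def by blast
      moreover have "is_rsum \<rho>'" "is_rsum \<sigma>'"
        using rresid_is_rsum x y unfolding x_def y_def by blast+
      moreover have "\<forall>al \<rho>k \<sigma>k. rbr \<rho>' al = Some \<rho>k \<longrightarrow> rbr \<sigma>' (dual al) = Some \<sigma>k \<longrightarrow>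
          \<not> compliant \<rho>k \<sigma>k"
        using less.prems(3) rbr_rresid x y unfolding x_def y_def by blast
      ultimately show ?thesis
        using less.hyps x y by blast
    next
      case False
      have "x \<noteq> Some One"
        using rresid_is_rsum unfolding x_def by fastforce
      with False show ?thesis
        using rresid_is_rsum unfolding x_def y_def
        by (intro may_fail_stuck_empty_hist no_red0_rsum_opts) blast+
    qed
    ultimately show ?thesis
      by (blast intro: may_fail_red may_fail_reds)
  next
    case False
    then show ?thesis
      using less.prems(1,2) by (intro may_fail_stuck_empty_hist no_red0_rsum_opts) auto
  qed
qed

lemma compliant_rsum:
  assumes "is_rsum \<rho>" and "is_rsum \<sigma>" and "compliant \<rho> \<sigma>"
  shows "\<exists>al \<rho>k \<sigma>k. rbr \<rho> al = Some \<rho>k \<and> rbr \<sigma> (dual al) = Some \<sigma>k \<and> compliant \<rho>k \<sigma>k"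
  using may_fail_rsum[OF assms(1,2)] assms(3) by (auto simp: compliant_iff_not_may_fail)

lemma compliant_reds:
  assumes "compliant \<rho> \<sigma>" and "red\<^sup>*\<^sup>* (([], Some \<rho>), ([], Some \<sigma>)) (([], Some \<rho>'), ([], Some \<sigma>'))"
  shows "compliant \<rho>' \<sigma>'"
  using assms may_fail_reds unfolding compliant_iff_not_may_fail by blast

lemma compliant_commit_left:
  assumes "compliant (UOut f) \<sigma>" and "fmlookup f a = Some r" and "fcard (fmdom f) \<noteq> 1"
  shows "compliant (UOut (fmupd a r fmempty)) \<sigma>"
proof (rule compliant_reds[OF assms(1)], intro r_into_rtranclp red.base red0.tauL trans.uout_tau)
  show "fmdom' f \<noteq> {a}" using assms(3) by (auto simp: fcard.rep_eq fmdom'_alt_def[symmetric])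
qed (fact assms(2))

lemma compliant_commit_right:
  assumes "compliant \<rho> (UOut g)" and "fmlookup g a = Some s" and "fcard (fmdom g) \<noteq> 1"
  shows "compliant \<rho> (UOut (fmupd a s fmempty))"
proof (rule compliant_reds[OF assms(1)], intro r_into_rtranclp red.base red0.tauR trans.uout_tau)
  show "fmdom' g \<noteq> {a}" using assms(3) by (auto simp: fcard.rep_eq fmdom'_alt_def[symmetric])
qed (fact assms(2))

lemma is_rsum_UOut_single: "is_rsum (UOut (fmupd a s fmempty))"
  by (simp add: fcard.rep_eq)

lemma rbr_UOut_single: "rbr (UOut (fmupd a s fmempty)) al = (if al = Out a then Some s else None)"
  by (cases al) (auto simp: fcard.rep_eq)

lemma rbr_InD: "rbr \<rho> (In a) = Some x \<Longrightarrow> \<exists>f. \<rho> = Inp f \<and> fmlookup f a = Some x"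
  by (cases \<rho>) auto

lemma not_compliant_rsum_One:
  assumes "is_rsum \<rho>"
  shows "\<not> compliant \<rho> One"
proof -
  have "\<nexists>r. red0 (([], Some \<rho>), ([], Some One)) r"
    using assms by (auto elim!: red0.cases simp: trans_One rsum_no_trans_Tau)
  then show ?thesis
    using assms may_fail_stuck_empty_hist unfolding compliant_iff_not_may_fail by fastforce
qed

lemma compliant_rsum_UOut:
  assumes "is_rsum \<rho>" and "compliant \<rho> (UOut g)" and "fcard (fmdom g) \<noteq> 1"
    and "fmlookup g a = Some s"
  shows "\<exists>f \<rho>a. \<rho> = Inp f \<and> fmlookup f a = Some \<rho>a \<and> compliant \<rho>a s"
proof -
  have "compliant \<rho> (UOut (fmupd a s fmempty))"
    using compliant_commit_right[OF assms(2,4,3)] .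
  then obtain al \<rho>k \<sigma>k where \<rho>k: "rbr \<rho> al = Some \<rho>k" "compliant \<rho>k \<sigma>k"
    and \<sigma>k: "rbr (UOut (fmupd a s fmempty)) (dual al) = Some \<sigma>k"
    using compliant_rsum[OF assms(1) is_rsum_UOut_single] by blast
  from \<sigma>k have "al = In a \<and> \<sigma>k = s"
    by (cases al) (simp_all add: rbr_UOut_single split: if_splits)
  with \<rho>k rbr_InD[of \<rho> a \<rho>k] show ?thesis
    by auto
qed

lemma compliant_UOut_rsum:
  assumes "is_rsum \<sigma>" and "compliant (UOut f) \<sigma>" and "fcard (fmdom f) \<noteq> 1"
    and "fmlookup f a = Some r"
  shows "\<exists>g \<sigma>a. \<sigma> = Inp g \<and> fmlookup g a = Some \<sigma>a \<and> compliant r \<sigma>a"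
proof -
  have "compliant (UOut (fmupd a r fmempty)) \<sigma>"
    using compliant_commit_left[OF assms(2,4,3)] .
  then obtain al \<rho>k \<sigma>k where \<sigma>k: "rbr \<sigma> (dual al) = Some \<sigma>k" "compliant \<rho>k \<sigma>k"
    and \<rho>k: "rbr (UOut (fmupd a r fmempty)) al = Some \<rho>k"
    using compliant_rsum[OF is_rsum_UOut_single assms(1)] by blast
  from \<rho>k have "al = Out a \<and> \<rho>k = r"
    by (simp add: rbr_UOut_single split: if_splits)
  with \<sigma>k rbr_InD[of \<sigma> a \<sigma>k] show ?thesis
    by auto
qed

lemma nonempty_top_UOut: "nonempty_top (UOut g) \<Longrightarrow> \<exists>a s. fmlookup g a = Some s"
  by (metis fmdom_notI fsubsetI fsubset_fempty nonempty_top.simps(4) option.exhaust)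

lemma fmdom_subset_pointwise:
  assumes "\<And>a x. fmlookup f a = Some x \<Longrightarrow> \<exists>y. fmlookup g a = Some y \<and> P x y"
  shows "fmdom f |\<subseteq>| fmdom g \<and> (\<forall>a x y. fmlookup f a = Some x \<longrightarrow> fmlookup g a = Some y \<longrightarrow> P x y)"
proof
  show "fmdom f |\<subseteq>| fmdom g"
    using assms by (fastforce simp: fmlookup_dom_iff)
  show "\<forall>a x y. fmlookup f a = Some x \<longrightarrow> fmlookup g a = Some y \<longrightarrow> P x y"
    using assms by force
qed

lemma compliant_UOut_client_cases:
  assumes "compliant (UOut f) \<sigma>" and "fcard (fmdom f) \<noteq> 1"
    and "nonempty_top (UOut f)" and "nonempty_top \<sigma>"
  shows "\<exists>g. \<sigma> = Inp g \<and> fmdom f |\<subseteq>| fmdom g \<and>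
    (\<forall>a \<rho>a \<sigma>a. fmlookup f a = Some \<rho>a \<longrightarrow> fmlookup g a = Some \<sigma>a \<longrightarrow> compliant \<rho>a \<sigma>a)"
proof -
  have branch: "\<exists>g \<sigma>a. \<sigma> = Inp g \<and> fmlookup g a = Some \<sigma>a \<and> compliant r \<sigma>a"
    if r: "fmlookup f a = Some r" for a r
  proof -
    consider "\<sigma> = One" | "is_rsum \<sigma>" | g where "\<sigma> = UOut g" "fcard (fmdom g) \<noteq> 1"
      by (cases \<sigma>) auto
    then show ?thesis
    proof cases
      case 1
      then show ?thesis
        using not_compliant_rsum_One[OF is_rsum_UOut_single[of a r]]
          compliant_commit_left[OF assms(1) r assms(2)] by simp
    next
      case 2
      show ?thesis
        using compliant_UOut_rsum[OF 2 assms(1,2) r] .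
    next
      case 3
      obtain b t where "fmlookup g b = Some t"
        using nonempty_top_UOut assms(4) 3(1) by blast
      then have "compliant (UOut f) (UOut (fmupd b t fmempty))"
        using compliant_commit_right[OF assms(1)[unfolded 3(1)] _ 3(2)] by blast
      then show ?thesis
        using compliant_UOut_rsum[OF is_rsum_UOut_single[of b t] _ assms(2) r] by simp
    qed
  qed
  obtain a r where "fmlookup f a = Some r"
    using nonempty_top_UOut assms(3) by blast
  then obtain g where g: "\<sigma> = Inp g"
    using branch by blast
  have "\<exists>\<sigma>a. fmlookup g a = Some \<sigma>a \<and> compliant r \<sigma>a" if "fmlookup f a = Some r" for a r
    using branch[OF that] unfolding g by simp
  then show ?thesis
    using g fmdom_subset_pointwise[of f g compliant] by blast
qed

lemma compliant_rsum_client_cases: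
  assumes "compliant \<rho> \<sigma>" and "is_rsum \<rho>" and "nonempty_top \<sigma>"
  shows "(is_rsum \<sigma> \<and>
      (\<exists>al \<rho>k \<sigma>k. rbr \<rho> al = Some \<rho>k \<and> rbr \<sigma> (dual al) = Some \<sigma>k \<and> compliant \<rho>k \<sigma>k))
    \<or> (\<exists>f g. \<rho> = Inp f \<and> \<sigma> = UOut g \<and> fmdom g |\<subseteq>| fmdom f \<and>
      (\<forall>a \<rho>a \<sigma>a. fmlookup f a = Some \<rho>a \<longrightarrow> fmlookup g a = Some \<sigma>a \<longrightarrow> compliant \<rho>a \<sigma>a))"
proof -
  consider "\<sigma> = One" | "is_rsum \<sigma>" | g where "\<sigma> = UOut g" "fcard (fmdom g) \<noteq> 1"
    by (cases \<sigma>) auto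
  then show ?thesis
  proof cases
    case 1
    then show ?thesis
      using not_compliant_rsum_One[OF assms(2)] assms(1) by simp
  next
    case 2
    then show ?thesis
      using compliant_rsum[OF assms(2) 2 assms(1)] by simp
  next
    case 3
    have branch: "\<exists>f \<rho>a. \<rho> = Inp f \<and> fmlookup f a = Some \<rho>a \<and> compliant \<rho>a s"
      if "fmlookup g a = Some s" for a s
      using compliant_rsum_UOut[OF assms(2) assms(1)[unfolded 3(1)] 3(2) that] .
    obtain b t where "fmlookup g b = Some t"
      using nonempty_top_UOut assms(3) 3(1) by blast
    then obtain f where f: "\<rho> = Inp f"
      using branch by blast
    have "\<exists>\<rho>a. fmlookup f a = Some \<rho>a \<and> compliant \<rho>a s" if "fmlookup g a = Some s" for a s
      using branch[OF that] unfolding f by simp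
    then have "fmdom g |\<subseteq>| fmdom f \<and>
        (\<forall>a \<sigma>a \<rho>a. fmlookup g a = Some \<sigma>a \<longrightarrow> fmlookup f a = Some \<rho>a \<longrightarrow> compliant \<rho>a \<sigma>a)"
      by (rule fmdom_subset_pointwise)
    then show ?thesis
      using f 3(1) by blast
  qed
qed

lemma rcontract_nonempty_top: "rcontract r \<Longrightarrow> nonempty_top r"
  unfolding rcontract_def using reach.refl by blast

theorem lemma4:
  fixes \<rho> \<sigma> :: "'n contract"
  assumes "rcontract \<rho>" and "rcontract \<sigma>" and "compliant \<rho> \<sigma>"
  shows "\<rho> = One
    \<or> (is_rsum \<rho> \<and> is_rsum \<sigma> \<and>
        (\<exists>al \<rho>k \<sigma>k. rbr \<rho> al = Some \<rho>k \<and> rbr \<sigma> (dual al) = Some \<sigma>k \<and> compliant \<rho>k \<sigma>k))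
    \<or> (\<exists>f g. is_uout \<rho> f \<and> \<sigma> = Inp g \<and> fmdom f |\<subseteq>| fmdom g \<and>
        (\<forall>a \<rho>a \<sigma>a. fmlookup f a = Some \<rho>a \<longrightarrow> fmlookup g a = Some \<sigma>a \<longrightarrow> compliant \<rho>a \<sigma>a))
    \<or> (\<exists>f g. \<rho> = Inp f \<and> is_uout \<sigma> g \<and> fmdom g |\<subseteq>| fmdom f \<and>
        (\<forall>a \<rho>a \<sigma>a. fmlookup f a = Some \<rho>a \<longrightarrow> fmlookup g a = Some \<sigma>a \<longrightarrow> compliant \<rho>a \<sigma>a))"
proof -
  have \<rho>: "nonempty_top \<rho>" and \<sigma>: "nonempty_top \<sigma>"
    using assms(1,2) rcontract_nonempty_top by blast+
  consider "\<rho> = One" | "is_rsum \<rho>" | f where "\<rho> = UOut f" "fcard (fmdom f) \<noteq> 1"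
    by (cases \<rho>) auto
  then show ?thesis
  proof cases
    case 2
    then show ?thesis
      using compliant_rsum_client_cases[OF assms(3) 2 \<sigma>] by (auto simp: is_uout_def)
  next
    case 3
    then show ?thesis
      using compliant_UOut_client_cases[of f \<sigma>] assms(3) \<rho> \<sigma> by (auto simp: is_uout_def)
  qed simp
qed

end
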